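(* Let $(X,d_X)$ be a discrete countable metric space, $Y=X\times\mathbb N$, and let $d_1$ be the metric on $X\sqcup Y=X\times\overline{\mathbb N}$ given by $d_1(x_n,y_m)=d_X(x,y)+|n-m|$ for $x,y\in X$, $n,m\in\overline{\mathbb N}$. Then, under the identification $T\leftrightarrow(T_n)_{n\in\mathbb N}$, $M_{X\times\mathbb N,d_1}$ coincides with the standard Hilbert $C^*$-module $\ell_2(C^*_u(X))$.
   Context: $\overline{\mathbb N}=\mathbb N\cup\{0\}$; $x_n$ denotes $(x,n)\in X\times\overline{\mathbb N}$, $X_n=X\times\{n\}$, and $X_0$ is identified with $X$. $H_Z=\ell^2(Z)$ with standard basis. $C^*_u(X)$ is the norm closure in $\mathbb B(H_X)$ of bounded finite-propagation operators (propagation at most $L$: $(\delta_x,T\delta_y)=0$ whenever $d_X(x,y)\ge L$). For a metric $d$ on $X\sqcup Y$ extending $d_X$, $M_{Y,d}$ is the norm closure in $\mathbb B(H_X,H_Y)$ of bounded operators $T:H_X\to H_Y$ of finite propagation (there is $L$ with $(\delta_y,T\delta_x)=0$ whenever $d(x,y)\ge L$). Here $H_{X\times\mathbb N}=\bigoplus_{n\ge1}H_{X_n}$; $Q_n$ is the projection onto $H_{X_n}$, and $T_n=Q_nT$ is regarded as an operator on $H_X$ via $H_{X_n}\cong H_X$, $\delta_{x_n}\leftrightarrow\delta_x$. For a $C^*$-algebra $A$, $\ell_2(A)$ is the Hilbert $A$-module of sequences $(a_n)$ in $A$ with $\sum_n a_n^*a_n$ norm convergent, with inner product $\langle(a_n),(b_n)\rangle=\sum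 a_n^*b_n$. *)

theory Defs
  imports "HOL-Analysis.Analysis" "HOL-Library.Countable"
begin

text \<open>Operators between l2 spaces are represented by their matrices:
  a matrix T :: 'j \<Rightarrow> 'i \<Rightarrow> complex represents the operator H_I \<rightarrow> H_J with
  (delta_j, T delta_i) = T j i.\<close>

definition is_metric :: "('a \<Rightarrow> 'a \<Rightarrow> real) \<Rightarrow> bool" where
  "is_metric d \<longleftrightarrow> (\<forall>x y. 0 \<le> d x y) \<and> (\<forall>x y. d x y = 0 \<longleftrightarrow> x = y)
     \<and> (\<forall>x y. d x y = d y x) \<and> (\<forall>x y z. d x z \<le> d x y + d y z)"

definition discrete_metric :: "('a \<Rightarrow> 'a \<Rightarrow> real) \<Rightarrow> bool" where
  "discrete_metric d \<longleftrightarrow> (\<forall>x. \<exists>e>0. \<forall>y. d x y < e \<longrightarrow> y = x)"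

definition form_values :: "('j \<Rightarrow> 'i \<Rightarrow> complex) \<Rightarrow> real set" where
  "form_values T = {cmod (\<Sum>j\<in>F. \<Sum>i\<in>G. cnj (w j) * T j i * v i) | F G w v.
      finite F \<and> finite G \<and> (\<Sum>j\<in>F. (cmod (w j))\<^sup>2) \<le> 1 \<and> (\<Sum>i\<in>G. (cmod (v i))\<^sup>2) \<le> 1}"

definition bounded_op :: "('j \<Rightarrow> 'i \<Rightarrow> complex) \<Rightarrow> bool" where
  "bounded_op T \<longleftrightarrow> bdd_above (form_values T)"

definition opnorm :: "('j \<Rightarrow> 'i \<Rightarrow> complex) \<Rightarrow> real" where
  "opnorm T = Sup (form_values T)"

definition madj :: "('j \<Rightarrow> 'i \<Rightarrow> complex) \<Rightarrow> ('i \<Rightarrow> 'j \<Rightarrow> complex)" where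
  "madj T = (\<lambda>i j. cnj (T j i))"

definition mmult :: "('k \<Rightarrow> 'j \<Rightarrow> complex) \<Rightarrow> ('j \<Rightarrow> 'i \<Rightarrow> complex) \<Rightarrow> ('k \<Rightarrow> 'i \<Rightarrow> complex)" where
  "mmult A B = (\<lambda>k i. infsum (\<lambda>j. A k j * B j i) UNIV)"

definition finite_prop :: "('j \<Rightarrow> 'i \<Rightarrow> real) \<Rightarrow> ('j \<Rightarrow> 'i \<Rightarrow> complex) \<Rightarrow> bool" where
  "finite_prop dist' T \<longleftrightarrow> (\<exists>L. \<forall>j i. dist' j i \<ge> L \<longrightarrow> T j i = 0)"

definition norm_closure_fp :: "('j \<Rightarrow> 'i \<Rightarrow> real) \<Rightarrow> ('j \<Rightarrow> 'i \<Rightarrow> complex) set" where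
  "norm_closure_fp dist' = {T. bounded_op T \<and> (\<forall>e>0. \<exists>S. bounded_op S \<and> finite_prop dist' S
       \<and> opnorm (\<lambda>j i. T j i - S j i) < e)}"

definition uniform_roe :: "('a \<Rightarrow> 'a \<Rightarrow> real) \<Rightarrow> ('a \<Rightarrow> 'a \<Rightarrow> complex) set" where
  "uniform_roe d = norm_closure_fp d"

text \<open>The metric d_1 on X \<times> Nbar (nat includes 0), x_n, y_m \<mapsto> d(x,y) + |n - m|.\<close>
definition d1 :: "('a \<Rightarrow> 'a \<Rightarrow> real) \<Rightarrow> ('a \<times> nat) \<Rightarrow> ('a \<times> nat) \<Rightarrow> real" where
  "d1 d p q = d (fst p) (fst q) + \<bar>real (snd p) - real (snd q)\<bar>"

text \<open>Y = X \<times> N with N = {1,2,...}: the index (y,k) of H_Y stands for y_{k+1}.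
  M_{Y,d1}: matrices (y,k),x of operators H_X \<rightarrow> H_Y.\<close>
definition M_Y_d1 :: "('a \<Rightarrow> 'a \<Rightarrow> real) \<Rightarrow> (('a \<times> nat) \<Rightarrow> 'a \<Rightarrow> complex) set" where
  "M_Y_d1 d = norm_closure_fp (\<lambda>(y, k) x. d1 d (y, Suc k) (x, 0))"

text \<open>T_n = Q_n T regarded as an operator on H_X (here n = k+1).\<close>
definition slice :: "(('a \<times> nat) \<Rightarrow> 'a \<Rightarrow> complex) \<Rightarrow> nat \<Rightarrow> ('a \<Rightarrow> 'a \<Rightarrow> complex)" where
  "slice T k = (\<lambda>y x. T (y, k) x)"

definition ell2_module :: "('a \<Rightarrow> 'a \<Rightarrow> complex) set \<Rightarrow> (nat \<Rightarrow> ('a \<Rightarrow> 'a \<Rightarrow> complex)) set" where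
  "ell2_module A = {a. (\<forall>n. a n \<in> A) \<and>
     (\<exists>L\<in>A. (\<lambda>N. opnorm (\<lambda>x z. (\<Sum>n<N. mmult (madj (a n)) (a n) x z) - L x z)) \<longlonglongrightarrow> 0)}"

end

(* For T in M_Y, every approximant S of finite propagation for d_1 has rows S_n of finite
   propagation for d, vanishing for all large n. Hence the rows T_n of T lie in C*_u(X), and the
   Gram sums sum_{n<N} T_n^* T_n differ from T^* T by the Gram operator of the tail of T beyond
   row N, whose norm is at most |T - S|^2 once S vanishes beyond row N. Moreover
   T^* T - S^* S = T^* (T - S) + (T - S)^* S, and S^* S has finite propagation by the triangle
   inequality for d, so T^* T lies in C*_u(X).
   Conversely, the squared norm of the tail of T beyond row N is bounded by the norm of
   sum_{N<=n<M} T_n^* T_n for M large, so norm convergence of the Gram sums makes the tails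
   small; the finitely many remaining rows are then approximated one at a time. *)
theory Submission
  imports Defs "HOL-Library.Function_Algebras"
begin

section \<open>Finite matrix forms and the operator norm\<close>

definition mform :: "('j \<Rightarrow> 'i \<Rightarrow> complex) \<Rightarrow> 'j set \<Rightarrow> 'i set \<Rightarrow> ('j \<Rightarrow> complex) \<Rightarrow> ('i \<Rightarrow> complex) \<Rightarrow> complex" where
  "mform T F G w v = (\<Sum>j\<in>F. \<Sum>i\<in>G. cnj (w j) * T j i * v i)"

definition sqnorm :: "'j set \<Rightarrow> ('j \<Rightarrow> complex) \<Rightarrow> real" where
  "sqnorm F w = (\<Sum>j\<in>F. (cmod (w j))\<^sup>2)"

definition mapply :: "('j \<Rightarrow> 'i \<Rightarrow> complex) \<Rightarrow> 'i set \<Rightarrow> ('i \<Rightarrow> complex) \<Rightarrow> 'j \<Rightarrow> complex" where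
  "mapply T G v j = (\<Sum>i\<in>G. T j i * v i)"

lemma form_values_eq:
  "form_values T = {cmod (mform T F G w v) | F G w v.
     finite F \<and> finite G \<and> sqnorm F w \<le> 1 \<and> sqnorm G v \<le> 1}"
  unfolding form_values_def mform_def sqnorm_def by simp

lemma sqnorm_nonneg: "0 \<le> sqnorm F w"
  unfolding sqnorm_def by (simp add: sum_nonneg)

lemma sqnorm_mono: "finite F \<Longrightarrow> F' \<subseteq> F \<Longrightarrow> sqnorm F' w \<le> sqnorm F w"
  unfolding sqnorm_def by (rule sum_mono2) auto

lemma sqnorm_eq_0D: "finite F \<Longrightarrow> sqnorm F w = 0 \<Longrightarrow> j \<in> F \<Longrightarrow> w j = 0"
  unfolding sqnorm_def by (simp add: sum_nonneg_eq_0_iff)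

lemma mform_mapply: "mform T F G w v = (\<Sum>j\<in>F. cnj (w j) * mapply T G v j)"
  unfolding mform_def mapply_def by (simp add: sum_distrib_left mult.assoc)

lemma mform_le_opnorm:
  assumes "bounded_op T" "finite F" "finite G" "sqnorm F w \<le> 1" "sqnorm G v \<le> 1"
  shows "cmod (mform T F G w v) \<le> opnorm T"
proof -
  have "cmod (mform T F G w v) \<in> form_values T"
    unfolding form_values_eq using assms by blast
  then show ?thesis
    using assms(1) unfolding bounded_op_def opnorm_def by (simp add: cSup_upper)
qed

lemma opnorm_nonneg: "bounded_op T \<Longrightarrow> 0 \<le> opnorm T"
  using mform_le_opnorm[of T "{}" "{}"] by (simp add: mform_def sqnorm_def)

lemma bounded_op_opnorm_leI:
  assumes "\<And>F G w v. finite F \<Longrightarrow> finite G \<Longrightarrow> sqnorm F w \<le> 1 \<Longrightarrow> sqnorm G v \<le> 1 \<Longrightarrow>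
    cmod (mform T F G w v) \<le> C"
  shows "bounded_op T \<and> opnorm T \<le> C"
proof -
  have "cmod (mform T {} {} w v) \<in> form_values T" for w v
    unfolding form_values_eq by (rule CollectI, intro exI conjI) (auto simp: sqnorm_def)
  then have "form_values T \<noteq> {}" by blast
  moreover have "\<And>x. x \<in> form_values T \<Longrightarrow> x \<le> C"
    unfolding form_values_eq using assms by blast
  ultimately show ?thesis
    unfolding bounded_op_def opnorm_def by (meson bdd_aboveI cSup_least)
qed

lemma opnorm_le_of_form_values_subset:
  fixes T :: "'j \<Rightarrow> 'i \<Rightarrow> complex" and T' :: "'l \<Rightarrow> 'k \<Rightarrow> complex"
  assumes "bounded_op T'" "form_values T \<subseteq> form_values T'"
  shows "bounded_op T \<and> opnorm T \<le> opnorm T'"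
proof (rule bounded_op_opnorm_leI)
  fix F :: "'j set" and G :: "'i set" and w v
  assume "finite F" "finite G" "sqnorm F w \<le> 1" "sqnorm G v \<le> 1"
  then have "cmod (mform T F G w v) \<in> form_values T'"
    using assms(2) unfolding form_values_eq by blast
  then show "cmod (mform T F G w v) \<le> opnorm T'"
    using assms(1) unfolding bounded_op_def opnorm_def by (simp add: cSup_upper)
qed

lemma mform_le_opnorm_sqnorm:
  assumes "bounded_op T" "finite F" "finite G"
  shows "cmod (mform T F G w v) \<le> opnorm T * sqrt (sqnorm F w) * sqrt (sqnorm G v)"
proof (cases "sqnorm F w = 0 \<or> sqnorm G v = 0")
  case True
  then have "mform T F G w v = 0"
    using sqnorm_eq_0D[OF assms(2), of w] sqnorm_eq_0D[OF assms(3), of v]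
    unfolding mform_def by auto
  then show ?thesis using opnorm_nonneg[OF assms(1)] by (simp add: sqnorm_nonneg)
next
  case False
  define a where "a = sqrt (sqnorm F w)"
  define b where "b = sqrt (sqnorm G v)"
  have a: "a > 0" and b: "b > 0"
    using False sqnorm_nonneg[of F w] sqnorm_nonneg[of G v] unfolding a_def b_def by auto
  have "sqnorm F (\<lambda>j. w j / a) = 1" "sqnorm G (\<lambda>i. v i / b) = 1"
    using a b sqnorm_nonneg[of F w] sqnorm_nonneg[of G v]
    unfolding a_def b_def sqnorm_def
    by (simp_all add: norm_divide power_divide sum_divide_distrib[symmetric])
  then have "cmod (mform T F G (\<lambda>j. w j / a) (\<lambda>i. v i / b)) \<le> opnorm T"
    by (intro mform_le_opnorm assms) auto
  moreover have "mform T F G (\<lambda>j. w j / a) (\<lambda>i. v i / b) = mform T F G w v / (a * b)"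
    unfolding mform_def by (simp add: sum_divide_distrib[symmetric] field_simps)
  ultimately have "cmod (mform T F G w v) / (a * b) \<le> opnorm T"
    using a b by (simp add: norm_divide norm_mult)
  then show ?thesis
    using a b unfolding a_def[symmetric] b_def[symmetric] by (simp add: pos_divide_le_eq mult.assoc)
qed

lemma mform_Cauchy_Schwarz:
  "(cmod (mform T F G w v))\<^sup>2 \<le> sqnorm F w * sqnorm F (mapply T G v)"
proof -
  have "cmod (mform T F G w v) \<le> (\<Sum>j\<in>F. cmod (w j) * cmod (mapply T G v j))"
    unfolding mform_mapply by (rule order_trans[OF norm_sum]) (simp add: norm_mult)
  then have "(cmod (mform T F G w v))\<^sup>2 \<le> (\<Sum>j\<in>F. cmod (w j) * cmod (mapply T G v j))\<^sup>2"
    by (rule power_mono) simp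
  also have "\<dots> \<le> sqnorm F w * sqnorm F (mapply T G v)"
    unfolding sqnorm_def by (rule Cauchy_Schwarz_ineq_sum)
  finally show ?thesis .
qed

lemma sqnorm_mapply_le:
  assumes "bounded_op T" "finite F" "finite G"
  shows "sqnorm F (mapply T G v) \<le> (opnorm T)\<^sup>2 * sqnorm G v"
proof -
  define S where "S = sqnorm F (mapply T G v)"
  have S0: "0 \<le> S" unfolding S_def by (rule sqnorm_nonneg)
  have "mform T F G (mapply T G v) v = S"
    unfolding mform_mapply S_def sqnorm_def of_real_sum
    by (intro sum.cong) (simp_all add: complex_norm_square[symmetric] mult.commute)
  then have "S \<le> opnorm T * sqrt S * sqrt (sqnorm G v)"
    using mform_le_opnorm_sqnorm[OF assms, of "mapply T G v" v] S0 by (simp add: S_def)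
  then have "sqrt S * sqrt S \<le> sqrt S * (opnorm T * sqrt (sqnorm G v))"
    using S0 by (simp add: mult_ac)
  then have "sqrt S \<le> opnorm T * sqrt (sqnorm G v) \<or> S = 0"
    using S0 by (metis mult_le_cancel_left_pos real_sqrt_gt_0_iff less_eq_real_def)
  moreover have "0 \<le> opnorm T * sqrt (sqnorm G v)"
    using opnorm_nonneg[OF assms(1)] sqnorm_nonneg[of G v] by simp
  ultimately have "S \<le> (opnorm T * sqrt (sqnorm G v))\<^sup>2"
    using S0 power_mono[of "sqrt S" _ 2] by fastforce
  then show ?thesis using sqnorm_nonneg[of G v] by (simp add: S_def power_mult_distrib)
qed

lemma sum_apply: "(\<Sum>k\<in>K. A k) x = (\<Sum>k\<in>K. A k x :: 'b :: comm_monoid_add)"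
  by (induction K rule: infinite_finite_induct) auto

lemma mform_add: "mform (A + B) F G w v = mform A F G w v + mform B F G w v"
  unfolding mform_def by (simp add: sum.distrib distrib_left distrib_right)

lemma mform_uminus: "mform (- A) F G w v = - mform A F G w v"
  unfolding mform_def by (simp add: sum_negf)

lemma mform_sum: "mform (\<Sum>k\<in>K. A k) F G w v = (\<Sum>k\<in>K. mform (A k) F G w v)"
  unfolding mform_def sum_apply by (simp add: sum_distrib_left sum_distrib_right sum.swap[of _ K])

lemma opnorm_add_le:
  fixes A B :: "'j \<Rightarrow> 'i \<Rightarrow> complex"
  assumes "bounded_op A" "bounded_op B"
  shows "bounded_op (A + B) \<and> opnorm (A + B) \<le> opnorm A + opnorm B"
proof (rule bounded_op_opnorm_leI)
  fix F :: "'j set" and G :: "'i set" and w v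
  assume "finite F" "finite G" "sqnorm F w \<le> 1" "sqnorm G v \<le> 1"
  then show "cmod (mform (A + B) F G w v) \<le> opnorm A + opnorm B"
    unfolding mform_add
    by (meson add_mono assms mform_le_opnorm norm_triangle_le)
qed

lemma form_values_uminus [simp]: "form_values (- A) = form_values A"
  unfolding form_values_eq mform_uminus by simp

lemma bounded_op_uminus [simp]: "bounded_op (- A) = bounded_op A"
  unfolding bounded_op_def by simp

lemma opnorm_uminus [simp]: "opnorm (- A) = opnorm A"
  unfolding opnorm_def by simp

lemma opnorm_diff_le:
  assumes "bounded_op A" "bounded_op B"
  shows "bounded_op (A - B) \<and> opnorm (A - B) \<le> opnorm A + opnorm B"
  using opnorm_add_le[of A "- B"] assms by simp

lemma opnorm_sum_le:
  assumes "\<And>k. k \<in> K \<Longrightarrow> bounded_op (A k)"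
  shows "bounded_op (\<Sum>k\<in>K. A k) \<and> opnorm (\<Sum>k\<in>K. A k) \<le> (\<Sum>k\<in>K. opnorm (A k))"
  using assms
proof (induction K rule: infinite_finite_induct)
  case (insert k K)
  then have IH: "bounded_op (A k)" "bounded_op (\<Sum>k\<in>K. A k)"
    "opnorm (\<Sum>k\<in>K. A k) \<le> (\<Sum>k\<in>K. opnorm (A k))" by auto
  have "bounded_op (A k + (\<Sum>k\<in>K. A k)) \<and>
      opnorm (A k + (\<Sum>k\<in>K. A k)) \<le> opnorm (A k) + (\<Sum>k\<in>K. opnorm (A k))"
    using opnorm_add_le[OF IH(1,2)] IH(3) by linarith
  then show ?case by (simp only: sum.insert[OF insert(1,2)])
qed (use bounded_op_opnorm_leI[of 0 0] in \<open>auto simp: mform_def\<close>)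

lemma norm_closure_fp_iff:
  "T \<in> norm_closure_fp D \<longleftrightarrow>
     bounded_op T \<and> (\<forall>e>0. \<exists>S. bounded_op S \<and> finite_prop D S \<and> opnorm (T - S) < e)"
  unfolding norm_closure_fp_def fun_diff_def by simp

section \<open>Square-summable columns and the products \<open>A\<^sup>* B\<close>\<close>

lemma summable_on_sum:
  fixes f :: "'i \<Rightarrow> 'a \<Rightarrow> 'b::{topological_comm_monoid_add,t2_space}"
  assumes "\<And>i. i \<in> I \<Longrightarrow> f i summable_on A"
  shows "(\<lambda>x. \<Sum>i\<in>I. f i x) summable_on A"
  using assms by (induction I rule: infinite_finite_induct) (auto intro: summable_on_add)

lemma infsum_sum:
  fixes f :: "'i \<Rightarrow> 'a \<Rightarrow> 'b::{topological_comm_monoid_add,t2_space}"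
  assumes "\<And>i. i \<in> I \<Longrightarrow> f i summable_on A"
  shows "infsum (\<lambda>x. \<Sum>i\<in>I. f i x) A = (\<Sum>i\<in>I. infsum (f i) A)"
  using assms
proof (induction I rule: infinite_finite_induct)
  case (insert i I)
  then show ?case by (simp add: infsum_add summable_on_sum)
qed simp_all

lemma infsum_diff:
  fixes f g :: "'a \<Rightarrow> complex"
  assumes "f summable_on A" "g summable_on A"
  shows "infsum (\<lambda>x. f x - g x) A = infsum f A - infsum g A"
  using infsum_add[of f A "\<lambda>x. - g x"] assms by (simp add: summable_on_uminus infsum_uminus)

lemma mapply_square_summable:
  assumes "bounded_op T" "finite G"
  shows "(\<lambda>j. (cmod (mapply T G v j))\<^sup>2) summable_on UNIV"
    and "(\<Sum>\<^sub>\<infinity>j. (cmod (mapply T G v j))\<^sup>2) \<le> (opnorm T)\<^sup>2 * sqnorm G v"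
proof -
  have le: "(\<Sum>j\<in>F. (cmod (mapply T G v j))\<^sup>2) \<le> (opnorm T)\<^sup>2 * sqnorm G v" if "finite F" for F
    using sqnorm_mapply_le[OF assms(1) that assms(2)] unfolding sqnorm_def .
  show s: "(\<lambda>j. (cmod (mapply T G v j))\<^sup>2) summable_on UNIV"
    by (rule nonneg_bdd_above_summable_on) (use le in \<open>auto intro!: bdd_aboveI\<close>)
  show "(\<Sum>\<^sub>\<infinity>j. (cmod (mapply T G v j))\<^sup>2) \<le> (opnorm T)\<^sup>2 * sqnorm G v"
    using s le by (simp add: infsum_le_finite_sums)
qed

lemma column_square_summable: "bounded_op T \<Longrightarrow> (\<lambda>j. (cmod (T j i))\<^sup>2) summable_on UNIV"
  using mapply_square_summable(1)[of T "{i}" "\<lambda>_. 1"] by (simp add: mapply_def)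

lemma square_summable_mult:
  fixes f g :: "'a \<Rightarrow> complex"
  assumes "(\<lambda>j. (cmod (f j))\<^sup>2) summable_on A" "(\<lambda>j. (cmod (g j))\<^sup>2) summable_on A"
  shows "(\<lambda>j. norm (f j * g j)) summable_on A" "(\<lambda>j. f j * g j) summable_on A"
proof -
  have "norm (f j * g j) \<le> (cmod (f j))\<^sup>2 + (cmod (g j))\<^sup>2" for j
    using sum_squares_bound[of "cmod (f j)" "cmod (g j)"]
      mult_nonneg_nonneg[OF norm_ge_zero norm_ge_zero, of "f j" "g j"]
    unfolding norm_mult by linarith
  then show a: "(\<lambda>j. norm (f j * g j)) summable_on A"
    by (intro summable_on_comparison_test[OF summable_on_add[OF assms]]) auto
  show "(\<lambda>j. f j * g j) summable_on A" by (rule abs_summable_summable[OF a])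
qed

lemma infsum_Cauchy_Schwarz:
  fixes f g :: "'a \<Rightarrow> complex"
  assumes "(\<lambda>j. (cmod (f j))\<^sup>2) summable_on UNIV" "(\<lambda>j. (cmod (g j))\<^sup>2) summable_on UNIV"
  shows "cmod (\<Sum>\<^sub>\<infinity>j. cnj (f j) * g j)
    \<le> sqrt (\<Sum>\<^sub>\<infinity>j. (cmod (f j))\<^sup>2) * sqrt (\<Sum>\<^sub>\<infinity>j. (cmod (g j))\<^sup>2)"
proof -
  note summable = square_summable_mult[of "\<lambda>j. cnj (f j)" UNIV g]
  have "cmod (\<Sum>\<^sub>\<infinity>j. cnj (f j) * g j) \<le> (\<Sum>\<^sub>\<infinity>j. norm (cnj (f j) * g j))"
    using summable(1) assms by (intro norm_infsum_bound) simp_all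
  also have "\<dots> \<le> sqrt (\<Sum>\<^sub>\<infinity>j. (cmod (f j))\<^sup>2) * sqrt (\<Sum>\<^sub>\<infinity>j. (cmod (g j))\<^sup>2)"
  proof (rule infsum_le_finite_sums)
    show "(\<lambda>j. norm (cnj (f j) * g j)) summable_on UNIV" using summable(1) assms by simp
    fix F :: "'a set" assume F: "finite F"
    have "(\<Sum>j\<in>F. cmod (f j) * cmod (g j))
        \<le> sqrt ((\<Sum>j\<in>F. (cmod (f j))\<^sup>2) * (\<Sum>j\<in>F. (cmod (g j))\<^sup>2))"
      by (rule real_le_rsqrt[OF Cauchy_Schwarz_ineq_sum])
    also have "\<dots> \<le> sqrt (\<Sum>\<^sub>\<infinity>j. (cmod (f j))\<^sup>2) * sqrt (\<Sum>\<^sub>\<infinity>j. (cmod (g j))\<^sup>2)"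
      unfolding real_sqrt_mult
      by (intro mult_mono real_sqrt_le_mono finite_sum_le_infsum assms F)
        (auto intro!: infsum_nonneg sum_nonneg)
    finally show "(\<Sum>j\<in>F. norm (cnj (f j) * g j))
        \<le> sqrt (\<Sum>\<^sub>\<infinity>j. (cmod (f j))\<^sup>2) * sqrt (\<Sum>\<^sub>\<infinity>j. (cmod (g j))\<^sup>2)"
      by (simp add: norm_mult)
  qed
  finally show ?thesis .
qed

lemma column_products_summable:
  "bounded_op A \<Longrightarrow> bounded_op B \<Longrightarrow> (\<lambda>j. cnj (A j i) * B j k) summable_on UNIV"
  using square_summable_mult(2)[of "\<lambda>j. cnj (A j i)" UNIV "\<lambda>j. B j k"]
    column_square_summable[of A i] column_square_summable[of B k] by simp

lemma mmult_madj_apply: "mmult (madj A) B i k = (\<Sum>\<^sub>\<infinity>j. cnj (A j i) * B j k)"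
  unfolding mmult_def madj_def by simp

lemma mform_mmult_madj:
  assumes "bounded_op A" "bounded_op B" "finite F" "finite G"
  shows "mform (mmult (madj A) B) F G w v = (\<Sum>\<^sub>\<infinity>j. cnj (mapply A F w j) * mapply B G v j)"
proof -
  define c where "c i k j = cnj (w i) * (cnj (A j i) * B j k) * v k" for i k j
  have c: "c i k summable_on UNIV" for i k
    unfolding c_def using column_products_summable[OF assms(1,2)]
    by (intro summable_on_cmult_left summable_on_cmult_right)
  have "mform (mmult (madj A) B) F G w v = (\<Sum>i\<in>F. \<Sum>k\<in>G. infsum (c i k) UNIV)"
    unfolding mform_def mmult_madj_apply c_def
    using column_products_summable[OF assms(1,2)]
    by (simp add: infsum_cmult_left infsum_cmult_right summable_on_cmult_right)
  also have "\<dots> = (\<Sum>\<^sub>\<infinity>j. \<Sum>i\<in>F. \<Sum>k\<in>G. c i k j)"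
    using c by (simp add: infsum_sum summable_on_sum)
  also have "\<dots> = (\<Sum>\<^sub>\<infinity>j. cnj (mapply A F w j) * mapply B G v j)"
    unfolding mapply_def c_def by (simp add: sum_product mult_ac sum.swap[of _ G])
  finally show ?thesis .
qed

lemma bounded_op_mmult_madj:
  fixes A :: "'j \<Rightarrow> 'i \<Rightarrow> complex" and B :: "'j \<Rightarrow> 'k \<Rightarrow> complex"
  assumes "bounded_op A" "bounded_op B"
  shows "bounded_op (mmult (madj A) B) \<and> opnorm (mmult (madj A) B) \<le> opnorm A * opnorm B"
proof (rule bounded_op_opnorm_leI)
  fix F :: "'i set" and G :: "'k set" and w v
  assume h: "finite F" "finite G" "sqnorm F w \<le> 1" "sqnorm G v \<le> 1"
  note sA = mapply_square_summable[OF assms(1) h(1), of w]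
  note sB = mapply_square_summable[OF assms(2) h(2), of v]
  have "(\<Sum>\<^sub>\<infinity>j. (cmod (mapply A F w j))\<^sup>2) \<le> (opnorm A)\<^sup>2"
    using sA(2) h(3) by (smt (verit) mult_left_le zero_le_power2)
  moreover have "(\<Sum>\<^sub>\<infinity>j. (cmod (mapply B G v j))\<^sup>2) \<le> (opnorm B)\<^sup>2"
    using sB(2) h(4) by (smt (verit) mult_left_le zero_le_power2)
  ultimately have "sqrt (\<Sum>\<^sub>\<infinity>j. (cmod (mapply A F w j))\<^sup>2) * sqrt (\<Sum>\<^sub>\<infinity>j. (cmod (mapply B G v j))\<^sup>2)
      \<le> opnorm A * opnorm B"
    using opnorm_nonneg[OF assms(1)] opnorm_nonneg[OF assms(2)]
    by (intro mult_mono) (auto intro!: infsum_nonneg simp: real_le_lsqrt)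
  then show "cmod (mform (mmult (madj A) B) F G w v) \<le> opnorm A * opnorm B"
    unfolding mform_mmult_madj[OF assms h(1,2)]
    using infsum_Cauchy_Schwarz[OF sA(1) sB(1)] by linarith
qed

lemma Re_mform_mmult_madj_self:
  assumes "bounded_op A" "finite G"
  shows "Re (mform (mmult (madj A) A) G G v v) = (\<Sum>\<^sub>\<infinity>j. (cmod (mapply A G v j))\<^sup>2)"
proof -
  note s = mapply_square_summable(1)[OF assms, of v]
  have "(\<lambda>j. cnj (mapply A G v j) * mapply A G v j) summable_on UNIV"
    using square_summable_mult(2)[of "\<lambda>j. cnj (mapply A G v j)"] s by simp
  then have "Re (mform (mmult (madj A) A) G G v v)
      = (\<Sum>\<^sub>\<infinity>j. Re (cnj (mapply A G v j) * mapply A G v j))"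
    unfolding mform_mmult_madj[OF assms(1,1,2,2)] by (rule infsum_Re[symmetric])
  then show ?thesis by (simp add: complex_norm_square[symmetric] mult.commute)
qed

lemma mmult_madj_self_diff:
  assumes "bounded_op T" "bounded_op S"
  shows "mmult (madj T) T - mmult (madj S) S = mmult (madj T) (T - S) + mmult (madj (T - S)) S"
proof (intro ext)
  fix x z
  have D: "bounded_op (T - S)" using opnorm_diff_le[OF assms] by simp
  have "mmult (madj T) (T - S) x z + mmult (madj (T - S)) S x z
      = (\<Sum>\<^sub>\<infinity>p. cnj (T p x) * (T - S) p z) + (\<Sum>\<^sub>\<infinity>p. cnj ((T - S) p x) * S p z)"
    unfolding mmult_madj_apply ..
  also have "\<dots> = (\<Sum>\<^sub>\<infinity>p. cnj (T p x) * (T - S) p z + cnj ((T - S) p x) * S p z)"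
    by (intro infsum_add[symmetric] column_products_summable D assms)
  also have "\<dots> = (\<Sum>\<^sub>\<infinity>p. cnj (T p x) * T p z - cnj (S p x) * S p z)"
    by (simp add: algebra_simps)
  also have "\<dots> = mmult (madj T) T x z - mmult (madj S) S x z"
    unfolding mmult_madj_apply using column_products_summable[OF assms(1,1)]
      column_products_summable[OF assms(2,2)] by (simp add: infsum_diff)
  finally show "(mmult (madj T) T - mmult (madj S) S) x z
      = (mmult (madj T) (T - S) + mmult (madj (T - S)) S) x z" by simp
qed

lemma opnorm_mmult_madj_self_diff_le:
  assumes "bounded_op T" "bounded_op S"
  shows "opnorm (mmult (madj T) T - mmult (madj S) S) \<le> opnorm (T - S) * (2 * opnorm T + opnorm (T - S))"
proof -
  have D: "bounded_op (T - S)" using opnorm_diff_le[OF assms] by simp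
  have "opnorm S \<le> opnorm T + opnorm (T - S)"
    using opnorm_diff_le[OF assms(1) D] by simp
  then have "opnorm (T - S) * opnorm S \<le> opnorm (T - S) * (opnorm T + opnorm (T - S))"
    using opnorm_nonneg[OF D] by (rule mult_left_mono)
  moreover obtain "bounded_op (mmult (madj T) (T - S))" "bounded_op (mmult (madj (T - S)) S)"
    "opnorm (mmult (madj T) (T - S)) \<le> opnorm T * opnorm (T - S)"
    "opnorm (mmult (madj (T - S)) S) \<le> opnorm (T - S) * opnorm S"
    using bounded_op_mmult_madj[OF assms(1) D] bounded_op_mmult_madj[OF D assms(2)] by blast
  ultimately show ?thesis
    unfolding mmult_madj_self_diff[OF assms]
    using opnorm_add_le[of "mmult (madj T) (T - S)" "mmult (madj (T - S)) S"]
    by (simp add: algebra_simps)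
qed

section \<open>Rows of \<open>X \<times> \<nat>\<close>: slices, tails and layers\<close>

definition tail_rows :: "nat \<Rightarrow> ('a \<times> nat \<Rightarrow> 'b \<Rightarrow> complex) \<Rightarrow> ('a \<times> nat \<Rightarrow> 'b \<Rightarrow> complex)" where
  "tail_rows N T = (\<lambda>p x. if N \<le> snd p then T p x else 0)"

definition layer :: "nat \<Rightarrow> ('a \<Rightarrow> 'b \<Rightarrow> complex) \<Rightarrow> ('a \<times> nat \<Rightarrow> 'b \<Rightarrow> complex)" where
  "layer k A = (\<lambda>p x. if snd p = k then A (fst p) x else 0)"

definition gram_sum :: "(nat \<Rightarrow> ('a \<Rightarrow> 'b \<Rightarrow> complex)) \<Rightarrow> nat \<Rightarrow> ('b \<Rightarrow> 'b \<Rightarrow> complex)" where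
  "gram_sum a N = (\<Sum>n<N. mmult (madj (a n)) (a n))"

lemma slice_diff: "slice (T - S) k = slice T k - slice S k"
  unfolding slice_def by (simp add: fun_eq_iff)

lemma tail_rows_diff: "tail_rows N (T - S) = tail_rows N T - tail_rows N S"
  unfolding tail_rows_def by (simp add: fun_eq_iff)

lemma layer_diff: "layer k (A - B) = layer k A - layer k B"
  unfolding layer_def by (simp add: fun_eq_iff)

lemma layer_sum_apply:
  "(\<Sum>k<N. layer k (A k)) (y, m) x = (if m < N then A m y x else 0)"
  unfolding sum_apply layer_def by simp

lemma tail_rows_plus_layers: "tail_rows N T + (\<Sum>k<N. layer k (slice T k)) = T"
  by (simp add: fun_eq_iff layer_sum_apply tail_rows_def slice_def)

lemma opnorm_slice_le:
  assumes "bounded_op T"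
  shows "bounded_op (slice T k) \<and> opnorm (slice T k) \<le> opnorm T"
proof (rule opnorm_le_of_form_values_subset[OF assms], rule subsetI)
  fix r assume "r \<in> form_values (slice T k)"
  then obtain F G w v where h: "r = cmod (mform (slice T k) F G w v)"
    "finite F" "finite G" "sqnorm F w \<le> 1" "sqnorm G v \<le> 1"
    unfolding form_values_eq by blast
  have inj: "inj_on (\<lambda>y. (y, k)) F" by (auto simp: inj_on_def)
  have "sqnorm ((\<lambda>y. (y, k)) ` F) (w \<circ> fst) = sqnorm F w"
    "mform (slice T k) F G w v = mform T ((\<lambda>y. (y, k)) ` F) G (w \<circ> fst) v"
    unfolding sqnorm_def mform_def slice_def by (simp_all add: sum.reindex[OF inj])
  then show "r \<in> form_values T"
    unfolding form_values_eq using h by fastforce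
qed

lemma opnorm_tail_rows_le:
  assumes "bounded_op T"
  shows "bounded_op (tail_rows N T) \<and> opnorm (tail_rows N T) \<le> opnorm T"
proof (rule opnorm_le_of_form_values_subset[OF assms], rule subsetI)
  fix r assume "r \<in> form_values (tail_rows N T)"
  then obtain F G w v where h: "r = cmod (mform (tail_rows N T) F G w v)"
    "finite F" "finite G" "sqnorm F w \<le> 1" "sqnorm G v \<le> 1"
    unfolding form_values_eq by blast
  define F' where "F' = {p\<in>F. N \<le> snd p}"
  have "sqnorm F' w \<le> 1" using sqnorm_mono[OF h(2), of F' w] h(4) unfolding F'_def by auto
  moreover have "mform (tail_rows N T) F G w v = mform T F' G w v"
    unfolding mform_def tail_rows_def F'_def using h(2)
    by (auto simp: sum.inter_filter intro!: sum.cong)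
  ultimately show "r \<in> form_values T"
    unfolding form_values_eq using h unfolding F'_def by fastforce
qed

lemma opnorm_layer_le:
  assumes "bounded_op A"
  shows "bounded_op (layer k A) \<and> opnorm (layer k A) \<le> opnorm A"
proof (rule opnorm_le_of_form_values_subset[OF assms], rule subsetI)
  fix r assume "r \<in> form_values (layer k A)"
  then obtain F G w v where h: "r = cmod (mform (layer k A) F G w v)"
    "finite F" "finite G" "sqnorm F w \<le> 1" "sqnorm G v \<le> 1"
    unfolding form_values_eq by blast
  define F' where "F' = {p\<in>F. snd p = k}"
  have inj: "inj_on fst F'" unfolding F'_def by (auto simp: inj_on_def prod_eq_iff)
  have w: "\<And>p. p \<in> F' \<Longrightarrow> w (fst p, k) = w p" unfolding F'_def by auto
  have "sqnorm (fst ` F') (\<lambda>y. w (y, k)) = sqnorm F' w"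
    unfolding sqnorm_def by (simp add: sum.reindex[OF inj] w)
  also have "\<dots> \<le> 1" using sqnorm_mono[OF h(2), of F' w] h(4) unfolding F'_def by auto
  finally have "sqnorm (fst ` F') (\<lambda>y. w (y, k)) \<le> 1" .
  moreover have "mform (layer k A) F G w v = mform (\<lambda>p. A (fst p)) F' G w v"
    unfolding mform_def layer_def F'_def using h(2)
    by (auto simp: sum.inter_filter intro!: sum.cong)
  moreover have "\<dots> = mform A (fst ` F') G (\<lambda>y. w (y, k)) v"
    unfolding mform_def by (simp add: sum.reindex[OF inj] w)
  ultimately show "r \<in> form_values A"
    unfolding form_values_eq using h unfolding F'_def by fastforce
qed

lemma infsum_split_rows:
  fixes f :: "'a \<times> nat \<Rightarrow> complex"
  assumes "f summable_on UNIV"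
  shows "(\<Sum>\<^sub>\<infinity>p. f p) = (\<Sum>n<N. \<Sum>\<^sub>\<infinity>y. f (y, n)) + (\<Sum>\<^sub>\<infinity>p. if N \<le> snd p then f p else 0)"
proof -
  have restrict: "(\<lambda>p. if P p then f p else 0) summable_on UNIV" for P
    using summable_on_subset_banach[OF assms, of "{p. P p}"]
      summable_on_cong_neutral[of UNIV "{p. P p}" "\<lambda>p. if P p then f p else 0" f] by auto
  have row: "(\<Sum>\<^sub>\<infinity>p. if snd p = n then f p else 0) = (\<Sum>\<^sub>\<infinity>y. f (y, n))" for n
  proof -
    have "(\<Sum>\<^sub>\<infinity>p. if snd p = n then f p else 0) = infsum f (range (\<lambda>y. (y, n)))"
      by (rule infsum_cong_neutral) auto
    also have "\<dots> = (\<Sum>\<^sub>\<infinity>y. f (y, n))"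
      by (subst infsum_reindex) (auto simp: inj_on_def o_def)
    finally show ?thesis .
  qed
  have "f = (\<lambda>p. (\<Sum>n<N. if snd p = n then f p else 0) + (if N \<le> snd p then f p else 0))"
    by (auto simp: fun_eq_iff)
  then have "(\<Sum>\<^sub>\<infinity>p. f p)
      = (\<Sum>\<^sub>\<infinity>p. (\<Sum>n<N. if snd p = n then f p else 0) + (if N \<le> snd p then f p else 0))"
    by (rule arg_cong)
  also have "\<dots> = (\<Sum>\<^sub>\<infinity>p. \<Sum>n<N. if snd p = n then f p else 0) + (\<Sum>\<^sub>\<infinity>p. if N \<le> snd p then f p else 0)"
    by (intro infsum_add summable_on_sum restrict)
  also have "(\<Sum>\<^sub>\<infinity>p. \<Sum>n<N. if snd p = n then f p else 0) = (\<Sum>n<N. \<Sum>\<^sub>\<infinity>p. if snd p = n then f p else 0)"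
    by (intro infsum_sum restrict)
  finally show ?thesis unfolding row .
qed

lemma mmult_madj_self_split:
  fixes T :: "'a \<times> nat \<Rightarrow> 'a \<Rightarrow> complex"
  assumes "bounded_op T"
  shows "mmult (madj T) T = gram_sum (slice T) N + mmult (madj (tail_rows N T)) (tail_rows N T)"
proof (intro ext)
  fix x z
  show "mmult (madj T) T x z = (gram_sum (slice T) N + mmult (madj (tail_rows N T)) (tail_rows N T)) x z"
    using infsum_split_rows[OF column_products_summable[OF assms assms, of x z], of N]
    unfolding gram_sum_def sum_apply mmult_madj_apply slice_def tail_rows_def
    by (simp add: if_distrib[of "\<lambda>t. _ * t"] cong: if_cong)
qed

section \<open>Finite propagation for \<open>d\<^sub>1\<close>\<close>

definition vanishes_beyond :: "('a \<Rightarrow> 'a \<Rightarrow> real) \<Rightarrow> real \<Rightarrow> ('a \<times> nat \<Rightarrow> 'a \<Rightarrow> complex) \<Rightarrow> bool" where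
  "vanishes_beyond d L S \<longleftrightarrow> (\<forall>y k x. L \<le> d y x + real k \<longrightarrow> S (y, k) x = 0)"

lemma d1_Suc_0: "d1 d (y, Suc k) (x, 0) = d y x + real k + 1"
  unfolding d1_def by simp

lemma finite_prop_d1_iff:
  "finite_prop (\<lambda>(y, k) x. d1 d (y, Suc k) (x, 0)) S \<longleftrightarrow> (\<exists>L. vanishes_beyond d L S)"
proof
  assume "finite_prop (\<lambda>(y, k) x. d1 d (y, Suc k) (x, 0)) S"
  then obtain L where L: "\<forall>j i. L \<le> (\<lambda>(y, k) x. d1 d (y, Suc k) (x, 0)) j i \<longrightarrow> S j i = 0"
    unfolding finite_prop_def by blast
  have "vanishes_beyond d (L - 1) S" unfolding vanishes_beyond_def
  proof (intro allI impI)
    fix y k x assume "L - 1 \<le> d y x + real k"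
    then show "S (y, k) x = 0" using L[rule_format, of "(y, k)" x] by (simp add: d1_Suc_0)
  qed
  then show "\<exists>L. vanishes_beyond d L S" ..
next
  assume "\<exists>L. vanishes_beyond d L S"
  then obtain L where L: "vanishes_beyond d L S" ..
  have "\<forall>j i. L + 1 \<le> (\<lambda>(y, k) x. d1 d (y, Suc k) (x, 0)) j i \<longrightarrow> S j i = 0"
  proof (intro allI impI)
    fix j i assume "L + 1 \<le> (\<lambda>(y, k) x. d1 d (y, Suc k) (x, 0)) j i"
    then show "S j i = 0" using L unfolding vanishes_beyond_def by (cases j) (simp add: d1_Suc_0)
  qed
  then show "finite_prop (\<lambda>(y, k) x. d1 d (y, Suc k) (x, 0)) S"
    unfolding finite_prop_def by blast
qed

lemma M_Y_d1_iff:
  "T \<in> M_Y_d1 d \<longleftrightarrow> bounded_op T \<and>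
     (\<forall>e>0. \<exists>S L. bounded_op S \<and> vanishes_beyond d L S \<and> opnorm (T - S) < e)"
  unfolding M_Y_d1_def norm_closure_fp_iff finite_prop_d1_iff by blast

lemma finite_prop_slice:
  "vanishes_beyond d L S \<Longrightarrow> finite_prop d (slice S k)"
  unfolding vanishes_beyond_def finite_prop_def slice_def
  by (metis add.commute le_add_same_cancel1 of_nat_0_le_iff order_trans)

lemma tail_rows_vanishing:
  fixes S :: "'a \<times> nat \<Rightarrow> 'a \<Rightarrow> complex"
  assumes "vanishes_beyond d L S" "\<And>x y. 0 \<le> d x y" "L \<le> real N"
  shows "tail_rows N S = 0"
proof (intro ext)
  fix p :: "'a \<times> nat" and x :: 'a
  obtain y k where p: "p = (y, k)" by fastforce
  have "N \<le> k \<Longrightarrow> L \<le> d y x + real k" using assms(2)[of y x] assms(3) by linarith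
  then show "tail_rows N S p x = 0 p x"
    using assms(1) unfolding vanishes_beyond_def tail_rows_def p by auto
qed

lemma finite_prop_mmult_madj_self:
  assumes "is_metric d" "vanishes_beyond d L S"
  shows "finite_prop d (mmult (madj S) S)"
  unfolding finite_prop_def
proof (intro exI allI impI)
  fix x z assume far: "2 * L \<le> d x z"
  have zero: "cnj (S p x) * S p z = 0" for p
  proof (cases p)
    case (Pair y k)
    have "S (y, k) x = 0 \<or> S (y, k) z = 0"
    proof (rule ccontr)
      assume "\<not> (S (y, k) x = 0 \<or> S (y, k) z = 0)"
      then have "\<not> L \<le> d y x + real k" "\<not> L \<le> d y z + real k"
        using assms(2) unfolding vanishes_beyond_def by blast+
      moreover have "d x z \<le> d y x + d y z"
        using assms(1) unfolding is_metric_def by metis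
      ultimately show False using far by simp
    qed
    then show ?thesis using Pair by auto
  qed
  show "mmult (madj S) S x z = 0"
    unfolding mmult_madj_apply using zero by (intro infsum_0) blast
qed

section \<open>From \<open>M\<^sub>Y\<close> to \<open>\<ell>\<^sub>2(C\<^sup>*\<^sub>u(X))\<close>\<close>

lemma uniform_roe_iff:
  "A \<in> uniform_roe d \<longleftrightarrow>
     bounded_op A \<and> (\<forall>e>0. \<exists>S. bounded_op S \<and> finite_prop d S \<and> opnorm (A - S) < e)"
  unfolding uniform_roe_def norm_closure_fp_iff ..

lemma slice_in_uniform_roe:
  assumes "T \<in> M_Y_d1 d"
  shows "slice T k \<in> uniform_roe d"
  unfolding uniform_roe_iff
proof (intro conjI allI impI)
  show "bounded_op (slice T k)" using assms opnorm_slice_le unfolding M_Y_d1_iff by blast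
  fix e :: real assume "e > 0"
  then obtain S L where S: "bounded_op S" "vanishes_beyond d L S" "opnorm (T - S) < e"
    using assms unfolding M_Y_d1_iff by blast
  have "bounded_op (T - S)" using assms S(1) opnorm_diff_le unfolding M_Y_d1_iff by blast
  then have "opnorm (slice T k - slice S k) < e"
    using opnorm_slice_le[of "T - S" k] S(3) unfolding slice_diff by linarith
  then show "\<exists>S. bounded_op S \<and> finite_prop d S \<and> opnorm (slice T k - S) < e"
    using opnorm_slice_le[OF S(1)] finite_prop_slice[OF S(2)] by blast
qed

lemma mmult_madj_self_in_uniform_roe:
  assumes "is_metric d" "T \<in> M_Y_d1 d"
  shows "mmult (madj T) T \<in> uniform_roe d"
  unfolding uniform_roe_iff
proof (intro conjI allI impI)
  have T: "bounded_op T" using assms(2) unfolding M_Y_d1_iff by blast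
  then show "bounded_op (mmult (madj T) T)" using bounded_op_mmult_madj by blast
  define c where "c = opnorm T"
  have c: "0 \<le> c" unfolding c_def by (rule opnorm_nonneg[OF T])
  fix e :: real assume e: "e > 0"
  then have "0 < min 1 (e / (2 * c + 2))" using c by simp
  then obtain S L where S: "bounded_op S" "vanishes_beyond d L S"
      "opnorm (T - S) < min 1 (e / (2 * c + 2))"
    using assms(2) unfolding M_Y_d1_iff by blast
  define t where "t = opnorm (T - S)"
  have t: "0 \<le> t" "t < 1" "t * (2 * c + 2) < e"
    using S(3) opnorm_nonneg opnorm_diff_le[OF T S(1)] c unfolding t_def
    by (auto simp: pos_less_divide_eq)
  have "opnorm (mmult (madj T) T - mmult (madj S) S) \<le> t * (2 * c + t)"
    using opnorm_mmult_madj_self_diff_le[OF T S(1)] unfolding t_def c_def .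
  also have "\<dots> \<le> t * (2 * c + 2)" using t by (intro mult_left_mono) auto
  finally have "opnorm (mmult (madj T) T - mmult (madj S) S) < e" using t by linarith
  then show "\<exists>S. bounded_op S \<and> finite_prop d S \<and> opnorm (mmult (madj T) T - S) < e"
    using bounded_op_mmult_madj[OF S(1) S(1)] finite_prop_mmult_madj_self[OF assms(1) S(2)] by blast
qed

lemma gram_sum_slice_tendsto:
  assumes "is_metric d" "T \<in> M_Y_d1 d"
  shows "(\<lambda>N. opnorm (gram_sum (slice T) N - mmult (madj T) T)) \<longlonglongrightarrow> 0"
proof (rule LIMSEQ_I)
  have T: "bounded_op T" using assms(2) unfolding M_Y_d1_iff by blast
  have d0: "\<And>x y. 0 \<le> d x y" using assms(1) unfolding is_metric_def by blast
  fix r :: real assume "0 < r"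
  then obtain S L where S: "bounded_op S" "vanishes_beyond d L S" "opnorm (T - S) < sqrt r"
    using assms(2) unfolding M_Y_d1_iff by (meson real_sqrt_gt_zero)
  have D: "bounded_op (T - S)" using opnorm_diff_le[OF T S(1)] by blast
  show "\<exists>N0. \<forall>N\<ge>N0. norm (opnorm (gram_sum (slice T) N - mmult (madj T) T) - 0) < r"
  proof (intro exI allI impI)
    fix N assume "nat \<lceil>L\<rceil> \<le> N"
    then have "tail_rows N S = 0" by (intro tail_rows_vanishing[OF S(2) d0]) linarith
    then have "tail_rows N T = tail_rows N (T - S)" by (simp add: tail_rows_diff)
    then have b: "bounded_op (tail_rows N T)" and "opnorm (tail_rows N T) < sqrt r"
      using opnorm_tail_rows_le[OF D, of N] S(3) by auto
    then have "opnorm (tail_rows N T) * opnorm (tail_rows N T) < sqrt r * sqrt r"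
      using opnorm_nonneg[OF b] \<open>0 < r\<close> by (intro mult_strict_mono) auto
    moreover have "opnorm (mmult (madj (tail_rows N T)) (tail_rows N T))
        \<le> opnorm (tail_rows N T) * opnorm (tail_rows N T)"
      using bounded_op_mmult_madj[OF b b] by blast
    moreover have "gram_sum (slice T) N - mmult (madj T) T = - mmult (madj (tail_rows N T)) (tail_rows N T)"
      unfolding mmult_madj_self_split[OF T, of N] by simp
    moreover have "0 \<le> opnorm (mmult (madj (tail_rows N T)) (tail_rows N T))"
      using bounded_op_mmult_madj[OF b b] opnorm_nonneg by blast
    ultimately show "norm (opnorm (gram_sum (slice T) N - mmult (madj T) T) - 0) < r"
      using \<open>0 < r\<close> by simp
  qed
qed

section \<open>From \<open>\<ell>\<^sub>2(C\<^sup>*\<^sub>u(X))\<close> to \<open>M\<^sub>Y\<close>\<close>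

lemma bounded_op_gram_sum: "(\<And>n. bounded_op (a n)) \<Longrightarrow> bounded_op (gram_sum a N)"
  unfolding gram_sum_def by (intro opnorm_sum_le[THEN conjunct1] bounded_op_mmult_madj[THEN conjunct1])

lemma gram_sum_diff:
  "N \<le> M \<Longrightarrow> gram_sum a M - gram_sum a N = (\<Sum>n\<in>{N..<M}. mmult (madj (a n)) (a n))"
  unfolding gram_sum_def using sum_diff_nat_ivl[of 0 N M] by (simp add: atLeast0LessThan)

lemma sqnorm_tail_rows_le:
  fixes T :: "'a \<times> nat \<Rightarrow> 'a \<Rightarrow> complex"
  assumes bs: "\<And>n. bounded_op (slice T n)" and F: "finite F" and G: "finite G"
    and below: "\<forall>p\<in>F. snd p < M"
  shows "sqnorm F (mapply (tail_rows N T) G v)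
    \<le> Re (mform (\<Sum>n\<in>{N..<M}. mmult (madj (slice T n)) (slice T n)) G G v v)"
proof -
  define h where "h p = (cmod (mapply (slice T (snd p)) G v (fst p)))\<^sup>2" for p
  have "sqnorm F (mapply (tail_rows N T) G v) = (\<Sum>p\<in>{p\<in>F. N \<le> snd p}. h p)"
    unfolding sqnorm_def h_def mapply_def tail_rows_def slice_def using F
    by (auto simp: sum.inter_filter intro!: sum.cong)
  also have "\<dots> \<le> (\<Sum>p\<in>fst ` F \<times> {N..<M}. h p)"
    using F below by (intro sum_mono2) (auto simp: h_def intro: rev_image_eqI)
  also have "\<dots> = (\<Sum>y\<in>fst ` F. \<Sum>n\<in>{N..<M}. h (y, n))"
    by (simp add: sum.cartesian_product)
  also have "\<dots> = (\<Sum>n\<in>{N..<M}. \<Sum>y\<in>fst ` F. h (y, n))"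
    by (rule sum.swap)
  also have "\<dots> \<le> (\<Sum>n\<in>{N..<M}. \<Sum>\<^sub>\<infinity>y. (cmod (mapply (slice T n) G v y))\<^sup>2)"
    using mapply_square_summable(1)[OF bs G] F
    by (intro sum_mono) (simp add: h_def finite_sum_le_infsum)
  also have "\<dots> = Re (mform (\<Sum>n\<in>{N..<M}. mmult (madj (slice T n)) (slice T n)) G G v v)"
    unfolding mform_sum Re_sum by (simp add: Re_mform_mmult_madj_self[OF bs G])
  finally show ?thesis .
qed

lemma opnorm_tail_rows_le_gram:
  fixes T :: "'a \<times> nat \<Rightarrow> 'a \<Rightarrow> complex"
  assumes bs: "\<And>n. bounded_op (slice T n)" and B: "0 \<le> B"
    and small: "\<And>M0. \<exists>M\<ge>M0. opnorm (gram_sum (slice T) M - gram_sum (slice T) N) \<le> B"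
  shows "bounded_op (tail_rows N T) \<and> opnorm (tail_rows N T) \<le> sqrt B"
proof (rule bounded_op_opnorm_leI)
  fix F :: "('a \<times> nat) set" and G :: "'a set" and w v
  assume h: "finite F" "finite G" "sqnorm F w \<le> 1" "sqnorm G v \<le> 1"
  obtain M where M: "M \<ge> max N (Suc (Max (insert 0 (snd ` F))))"
    "opnorm (gram_sum (slice T) M - gram_sum (slice T) N) \<le> B"
    using small[of "max N (Suc (Max (insert 0 (snd ` F))))"] by blast
  have below: "\<forall>p\<in>F. snd p < M"
  proof
    fix p assume "p \<in> F"
    then have "snd p \<le> Max (insert 0 (snd ` F))" using h(1) by (intro Max_ge) auto
    then show "snd p < M" using M(1) by simp
  qed
  define Q where "Q = (\<Sum>n\<in>{N..<M}. mmult (madj (slice T n)) (slice T n))"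
  have "Q = gram_sum (slice T) M - gram_sum (slice T) N"
    unfolding Q_def using M(1) by (simp add: gram_sum_diff)
  then have Q: "bounded_op Q" "opnorm Q \<le> B"
    using M(2) opnorm_diff_le[OF bounded_op_gram_sum bounded_op_gram_sum, OF bs bs] by auto
  have "(cmod (mform (tail_rows N T) F G w v))\<^sup>2 \<le> sqnorm F w * sqnorm F (mapply (tail_rows N T) G v)"
    by (rule mform_Cauchy_Schwarz)
  also have "\<dots> \<le> 1 * Re (mform Q G G v v)"
    using h sqnorm_tail_rows_le[OF bs h(1,2) below, of N v] sqnorm_nonneg unfolding Q_def
    by (intro mult_mono) auto
  also have "\<dots> \<le> opnorm Q * sqrt (sqnorm G v) * sqrt (sqnorm G v)"
    unfolding mult_1_left using mform_le_opnorm_sqnorm[OF Q(1) h(2,2), of v v]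
    by (meson complex_Re_le_cmod order_trans)
  also have "\<dots> = opnorm Q * sqnorm G v"
    using sqnorm_nonneg[of G v] by (simp add: mult.assoc)
  also have "\<dots> \<le> B * 1"
    using Q opnorm_nonneg[OF Q(1)] h(4) sqnorm_nonneg[of G v] by (intro mult_mono) auto
  finally show "cmod (mform (tail_rows N T) F G w v) \<le> sqrt B"
    by (intro real_le_rsqrt) simp
qed

lemma tail_rows_small:
  fixes T :: "'a \<times> nat \<Rightarrow> 'a \<Rightarrow> complex"
  assumes bs: "\<And>n. bounded_op (slice T n)" and L: "bounded_op L"
    and lim: "(\<lambda>N. opnorm (gram_sum (slice T) N - L)) \<longlonglongrightarrow> 0" and r: "0 < r"
  shows "\<exists>N. bounded_op (tail_rows N T) \<and> opnorm (tail_rows N T) < r"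
proof -
  have "0 < r\<^sup>2 / 4" using r by simp
  then obtain N where N: "\<forall>M\<ge>N. norm (opnorm (gram_sum (slice T) M - L) - 0) < r\<^sup>2 / 4"
    using LIMSEQ_D[OF lim] by blast
  have close: "opnorm (gram_sum (slice T) M - L) < r\<^sup>2 / 4" if "N \<le> M" for M
    using N that by auto
  have G: "bounded_op (gram_sum (slice T) K - L)" for K
    using opnorm_diff_le[OF bounded_op_gram_sum[of "slice T", OF bs] L] by blast
  have Cauchy: "opnorm (gram_sum (slice T) M - gram_sum (slice T) N) \<le> r\<^sup>2 / 2" if "N \<le> M" for M
  proof -
    have "(gram_sum (slice T) M - L) - (gram_sum (slice T) N - L)
        = gram_sum (slice T) M - gram_sum (slice T) N" by simp
    then have "opnorm (gram_sum (slice T) M - gram_sum (slice T) N)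
        \<le> opnorm (gram_sum (slice T) M - L) + opnorm (gram_sum (slice T) N - L)"
      using opnorm_diff_le[OF G G] by metis
    then show ?thesis using close[OF that] close[of N] by simp
  qed
  have "bounded_op (tail_rows N T) \<and> opnorm (tail_rows N T) \<le> sqrt (r\<^sup>2 / 2)"
  proof (rule opnorm_tail_rows_le_gram[OF bs])
    fix M0
    show "\<exists>M\<ge>M0. opnorm (gram_sum (slice T) M - gram_sum (slice T) N) \<le> r\<^sup>2 / 2"
      using Cauchy[of "max M0 N"] by (intro exI[of _ "max M0 N"]) simp
  qed simp
  moreover have "sqrt (r\<^sup>2 / 2) < r"
    using real_sqrt_less_mono[of "r\<^sup>2 / 2" "r\<^sup>2"] r by simp
  ultimately show ?thesis by fastforce
qed

lemma opnorm_layers_le: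
  assumes "\<And>k. bounded_op (A k)"
  shows "bounded_op (\<Sum>k<N. layer k (A k)) \<and> opnorm (\<Sum>k<N. layer k (A k)) \<le> (\<Sum>k<N. opnorm (A k))"
proof -
  have "opnorm (\<Sum>k<N. layer k (A k)) \<le> (\<Sum>k<N. opnorm (layer k (A k)))"
    "bounded_op (\<Sum>k<N. layer k (A k))"
    using opnorm_sum_le[of "{..<N}" "\<lambda>k. layer k (A k)"] opnorm_layer_le assms by auto
  moreover have "(\<Sum>k<N. opnorm (layer k (A k))) \<le> (\<Sum>k<N. opnorm (A k))"
    using opnorm_layer_le assms by (intro sum_mono) blast
  ultimately show ?thesis by linarith
qed

lemma vanishes_beyond_layers:
  assumes "\<And>k. finite_prop d (S k)"
  shows "\<exists>L. vanishes_beyond d L (\<Sum>k<N. layer k (S k))"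
proof -
  obtain R where R: "\<And>k y x. R k \<le> d y x \<Longrightarrow> S k y x = 0"
    using assms unfolding finite_prop_def by metis
  have "vanishes_beyond d (real N + (\<Sum>k<N. \<bar>R k\<bar>)) (\<Sum>k<N. layer k (S k))"
    unfolding vanishes_beyond_def layer_sum_apply
  proof (intro allI impI)
    fix y m x assume far: "real N + (\<Sum>k<N. \<bar>R k\<bar>) \<le> d y x + real m"
    show "(if m < N then S m y x else 0) = 0"
    proof (cases "m < N")
      case True
      then have "\<bar>R m\<bar> \<le> (\<Sum>k<N. \<bar>R k\<bar>)" by (intro member_le_sum) auto
      then have "R m \<le> d y x" using far True by linarith
      then show ?thesis using R by simp
    qed simp
  qed
  then show ?thesis ..
qed

lemma in_M_Y_d1_of_gram_sum_tendsto:
  fixes T :: "'a \<times> nat \<Rightarrow> 'a \<Rightarrow> complex"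
  assumes roe: "\<And>n. slice T n \<in> uniform_roe d" and L: "bounded_op L"
    and lim: "(\<lambda>N. opnorm (gram_sum (slice T) N - L)) \<longlonglongrightarrow> 0"
  shows "T \<in> M_Y_d1 d"
  unfolding M_Y_d1_iff
proof (intro conjI allI impI)
  have bs: "\<And>n. bounded_op (slice T n)" using roe unfolding uniform_roe_iff by blast
  note tail_rows_small = tail_rows_small[OF bs L lim]
  obtain N where "bounded_op (tail_rows N T)" using tail_rows_small[of 1] by auto
  then have "bounded_op (tail_rows N T + (\<Sum>k<N. layer k (slice T k)))"
    using opnorm_add_le[of "tail_rows N T" "\<Sum>k<N. layer k (slice T k)"]
      opnorm_layers_le[of "slice T", OF bs] by blast
  then show "bounded_op T" unfolding tail_rows_plus_layers .
  fix e :: real assume e: "0 < e"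
  then obtain N where tail: "bounded_op (tail_rows N T)" "opnorm (tail_rows N T) < e / 2"
    using tail_rows_small[of "e / 2"] by auto
  define \<delta> where "\<delta> = e / (2 * (real N + 1))"
  have "0 < \<delta>" unfolding \<delta>_def using e by simp
  then have "\<forall>k. \<exists>S. bounded_op S \<and> finite_prop d S \<and> opnorm (slice T k - S) < \<delta>"
    using roe unfolding uniform_roe_iff by blast
  then obtain S where S: "\<And>k. bounded_op (S k)" "\<And>k. finite_prop d (S k)"
    "\<And>k. opnorm (slice T k - S k) < \<delta>" by metis
  have D: "bounded_op (slice T k - S k)" for k using opnorm_diff_le[OF bs S(1)] by blast
  have "T - (\<Sum>k<N. layer k (S k))
      = tail_rows N T + (\<Sum>k<N. layer k (slice T k)) - (\<Sum>k<N. layer k (S k))"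
    by (simp only: tail_rows_plus_layers)
  also have "\<dots> = tail_rows N T + (\<Sum>k<N. layer k (slice T k - S k))"
    by (simp add: layer_diff sum_subtractf)
  finally have "T - (\<Sum>k<N. layer k (S k)) = tail_rows N T + (\<Sum>k<N. layer k (slice T k - S k))" .
  moreover obtain "bounded_op (\<Sum>k<N. layer k (slice T k - S k))"
    "opnorm (\<Sum>k<N. layer k (slice T k - S k)) \<le> (\<Sum>k<N. opnorm (slice T k - S k))"
    using opnorm_layers_le[of "\<lambda>k. slice T k - S k", OF D] by blast
  moreover have "(\<Sum>k<N. opnorm (slice T k - S k)) \<le> (\<Sum>k<N. \<delta>)"
    using S(3) by (intro sum_mono) (simp add: less_imp_le)
  moreover have "(\<Sum>k<N. \<delta>) < e / 2" unfolding \<delta>_def using e by (simp add: field_simps)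
  ultimately have "opnorm (T - (\<Sum>k<N. layer k (S k))) < e"
    using tail opnorm_add_le[of "tail_rows N T" "\<Sum>k<N. layer k (slice T k - S k)"] by simp
  moreover obtain R where "vanishes_beyond d R (\<Sum>k<N. layer k (S k))"
    using vanishes_beyond_layers[of d S N, OF S(2)] by blast
  moreover have "bounded_op (\<Sum>k<N. layer k (S k))"
    using opnorm_layers_le[of S N, OF S(1)] by blast
  ultimately show "\<exists>S L. bounded_op S \<and> vanishes_beyond d L S \<and> opnorm (T - S) < e"
    by blast
qed

lemma ell2_module_iff:
  "a \<in> ell2_module A \<longleftrightarrow> (\<forall>n. a n \<in> A) \<and> (\<exists>L\<in>A. (\<lambda>N. opnorm (gram_sum a N - L)) \<longlonglongrightarrow> 0)"
proof -
  have "(\<lambda>x z. (\<Sum>n<N. mmult (madj (a n)) (a n) x z) - L x z) = gram_sum a N - L" for N L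
    unfolding gram_sum_def by (simp add: fun_eq_iff sum_apply)
  then show ?thesis unfolding ell2_module_def by simp
qed

theorem mainTheorem9:
  fixes d :: "'a::countable \<Rightarrow> 'a \<Rightarrow> real"
  assumes "is_metric d" and "discrete_metric d"
  shows "\<forall>T :: ('a \<times> nat) \<Rightarrow> 'a \<Rightarrow> complex.
           T \<in> M_Y_d1 d \<longleftrightarrow> slice T \<in> ell2_module (uniform_roe d)"
proof (intro allI iffI)
  fix T :: "'a \<times> nat \<Rightarrow> 'a \<Rightarrow> complex"
  assume "T \<in> M_Y_d1 d"
  then show "slice T \<in> ell2_module (uniform_roe d)"
    unfolding ell2_module_iff
    using slice_in_uniform_roe mmult_madj_self_in_uniform_roe[OF assms(1)]
      gram_sum_slice_tendsto[OF assms(1)] by blast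
next
  fix T :: "'a \<times> nat \<Rightarrow> 'a \<Rightarrow> complex"
  assume "slice T \<in> ell2_module (uniform_roe d)"
  then obtain L where "\<And>n. slice T n \<in> uniform_roe d" "L \<in> uniform_roe d"
    "(\<lambda>N. opnorm (gram_sum (slice T) N - L)) \<longlonglongrightarrow> 0"
    unfolding ell2_module_iff by blast
  then show "T \<in> M_Y_d1 d"
    using in_M_Y_d1_of_gram_sum_tendsto uniform_roe_iff by blast
qed

end
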